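(* Let $n\geq 2$, let $\Omega$ be a region (nonempty open connected subset) of $\mathbb{C}$, and let $F:\Omega\to\mathbb{M}_n$ be analytic. If there is a $z_0\in\Omega$ such that $\|F(z)\|\leq\|F(z_0)\|$ for all $z\in\Omega$, then there exist constant $n\times n$ unitary matrices $U$ and $V$ and an analytic function $G:\Omega\to\mathbb{M}_{n-1}$ such that \[F(z)=U\begin{bmatrix}\|F(z_0)\| & 0\\ 0 & G(z)\end{bmatrix}V\quad\text{for all } z\in\Omega.\]
   Context: $\mathbb{M}_n$ denotes the set of $n\times n$ complex matrices (the paper takes $n>1$ throughout). $\|T\|$ denotes the operator norm of $T\in\mathbb{M}_n$ induced by the Euclidean norm on $\mathbb{C}^n$. A function $F:\Omega\to\mathbb{M}_n$ is analytic if it is complex differentiable with respect to this norm, equivalently if every entry of $F$ is analytic on $\Omega$. A matrix $A$ is unitary if $A^*A=AA^*=I$. *)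

theory Defs
  imports "HOL-Analysis.Analysis" "Jordan_Normal_Form.Matrix"
begin

definition vnorm :: "complex vec \<Rightarrow> real" where
  "vnorm v = sqrt (\<Sum>i<dim_vec v. (cmod (v $ i))\<^sup>2)"

definition opnorm :: "complex mat \<Rightarrow> real" where
  "opnorm A = Sup {vnorm (A *\<^sub>v x) | x. x \<in> carrier_vec (dim_col A) \<and> vnorm x = 1}"

definition adj :: "complex mat \<Rightarrow> complex mat" where
  "adj A = mat (dim_col A) (dim_row A) (\<lambda>(i,j). cnj (A $$ (j,i)))"

definition unitary_mat :: "nat \<Rightarrow> complex mat \<Rightarrow> bool" where
  "unitary_mat n A \<longleftrightarrow> A \<in> carrier_mat n n \<and> adj A * A = 1\<^sub>m n \<and> A * adj A = 1\<^sub>m n"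

definition mat_analytic_on :: "nat \<Rightarrow> (complex \<Rightarrow> complex mat) \<Rightarrow> complex set \<Rightarrow> bool" where
  "mat_analytic_on n F S \<longleftrightarrow> (\<forall>z\<in>S. F z \<in> carrier_mat n n) \<and>
     (\<forall>i<n. \<forall>j<n. (\<lambda>z. F z $$ (i,j)) analytic_on S)"

end

(* Let M = \<parallel>F z0\<parallel> and choose unit vectors x, y with F z0 x = M y. The analytic function
   z \<mapsto> <F z x, y> is bounded by M and attains M at z0, so by the maximum modulus principle it
   is constantly M, and the equality case of Cauchy-Schwarz gives F z x = M y and, dually,
   (F z)\<^sup>* y = M x on all of the region. Completing x and y to unitary matrices W and U, the
   matrix U\<^sup>* (F z) W has first row and first column (M, 0, ..., 0); this is the block form,
   with V = W\<^sup>*. *)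

theory Submission
  imports Defs "HOL-Complex_Analysis.Conformal_Mappings" "Jordan_Normal_Form.Schur_Decomposition"
begin

section \<open>Inner product and Euclidean norm\<close>

lemma index_mult_mat_vec_sum:
  assumes "A \<in> carrier_mat m n" "x \<in> carrier_vec n" "i < m"
  shows "(A *\<^sub>v x) $ i = (\<Sum>j<n. A $$ (i,j) * x $ j)"
  using assms by (simp add: scalar_prod_def lessThan_atLeast0)

lemma cscalar_prod_complex:
  fixes u v :: "complex vec"
  shows "u \<bullet>c v = (\<Sum>i<dim_vec v. u $ i * cnj (v $ i))"
  by (simp add: scalar_prod_def lessThan_atLeast0)

lemma cscalar_prod_swap:
  fixes u v :: "complex vec"
  assumes "dim_vec u = dim_vec v"
  shows "v \<bullet>c u = cnj (u \<bullet>c v)"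
  using assms by (simp add: cscalar_prod_complex mult.commute)

lemma cscalar_prod_smult:
  fixes u w :: "complex vec"
  assumes "dim_vec u = dim_vec w"
  shows "(a \<cdot>\<^sub>v u) \<bullet>c (b \<cdot>\<^sub>v w) = a * cnj b * (u \<bullet>c w)"
  using assms by (auto simp: cscalar_prod_complex sum_distrib_left algebra_simps intro!: sum.cong)

lemma vnorm_eq_L2_set: "vnorm v = L2_set (\<lambda>i. cmod (v $ i)) {..<dim_vec v}"
  unfolding vnorm_def L2_set_def by simp

lemma vnorm_nonneg: "vnorm v \<ge> 0"
  unfolding vnorm_eq_L2_set by simp

lemma cscalar_prod_self: "v \<bullet>c v = of_real ((vnorm v)\<^sup>2)"
proof -
  have "(vnorm v)\<^sup>2 = (\<Sum>i<dim_vec v. (cmod (v $ i))\<^sup>2)"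
    unfolding vnorm_def by (simp add: sum_nonneg)
  then show ?thesis
    unfolding cscalar_prod_complex by (simp add: complex_norm_square[symmetric])
qed

lemma vnorm_smult: "vnorm (c \<cdot>\<^sub>v v) = cmod c * vnorm v"
proof -
  have "L2_set (\<lambda>i. cmod ((c \<cdot>\<^sub>v v) $ i)) {..<dim_vec v} = L2_set (\<lambda>i. cmod c * cmod (v $ i)) {..<dim_vec v}"
    by (rule L2_set_cong) (auto simp: norm_mult)
  then show ?thesis unfolding vnorm_eq_L2_set by (simp add: L2_set_right_distrib)
qed

lemma vnorm_eq_0_iff: "vnorm v = 0 \<longleftrightarrow> v = 0\<^sub>v (dim_vec v)"
proof
  assume "vnorm v = 0"
  then have "\<forall>i\<in>{..<dim_vec v}. cmod (v $ i) = 0"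
    unfolding vnorm_eq_L2_set by (subst L2_set_eq_0_iff[symmetric]) auto
  then show "v = 0\<^sub>v (dim_vec v)" by (intro eq_vecI) auto
next
  assume "v = 0\<^sub>v (dim_vec v)"
  then have "\<And>i. i < dim_vec v \<Longrightarrow> v $ i = 0" by (metis index_zero_vec(1))
  then show "vnorm v = 0" by (simp add: vnorm_def)
qed

lemma vnorm_unit_vec: "i < n \<Longrightarrow> vnorm (unit_vec n i :: complex vec) = 1"
proof -
  assume "i < n"
  have "(\<Sum>k<n. (cmod (unit_vec n i $ k :: complex))\<^sup>2) = (\<Sum>k<n. if k = i then 1 else 0)"
    by (rule sum.cong) (auto simp: unit_vec_def)
  with \<open>i < n\<close> show ?thesis by (simp add: vnorm_def)
qed

lemma exists_unit_vec_smult_eq: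
  fixes v :: "complex vec"
  assumes v: "v \<in> carrier_vec n" and n: "n > 0"
  obtains y where "y \<in> carrier_vec n" "vnorm y = 1" "v = of_real (vnorm v) \<cdot>\<^sub>v y"
proof (cases "vnorm v = 0")
  case True
  then have "v = of_real (vnorm v) \<cdot>\<^sub>v unit_vec n 0"
    using v vnorm_eq_0_iff[of v] by (intro eq_vecI) auto
  then show ?thesis using n vnorm_unit_vec[OF n] by (intro that[of "unit_vec n 0"]) auto
next
  case False
  then have pos: "vnorm v > 0" using vnorm_nonneg[of v] by linarith
  define y where "y = of_real (1 / vnorm v) \<cdot>\<^sub>v v"
  have "y \<in> carrier_vec n" unfolding y_def using v by simp
  moreover have "vnorm y = 1" unfolding y_def using pos by (simp add: vnorm_smult norm_divide)
  moreover have "v = of_real (vnorm v) \<cdot>\<^sub>v y" unfolding y_def using pos by (intro eq_vecI) auto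
  ultimately show ?thesis by (rule that)
qed

lemma norm_cscalar_prod_le:
  assumes "dim_vec u = dim_vec v"
  shows "cmod (u \<bullet>c v) \<le> vnorm u * vnorm v"
proof -
  have "cmod (u \<bullet>c v) \<le> (\<Sum>i<dim_vec v. \<bar>cmod (u $ i)\<bar> * \<bar>cmod (v $ i)\<bar>)"
    unfolding cscalar_prod_complex by (rule order_trans[OF norm_sum]) (simp add: norm_mult)
  also have "\<dots> \<le> L2_set (\<lambda>i. cmod (u $ i)) {..<dim_vec v} * L2_set (\<lambda>i. cmod (v $ i)) {..<dim_vec v}"
    by (rule L2_set_mult_ineq)
  finally show ?thesis unfolding vnorm_eq_L2_set using assms by simp
qed

text \<open>Equality case of Cauchy--Schwarz: \<open>\<parallel>u - M y\<parallel>\<^sup>2 = \<parallel>u\<parallel>\<^sup>2 - M\<^sup>2 \<le> 0\<close>.\<close>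
lemma eq_smult_of_cscalar_prod_eq:
  fixes u y :: "complex vec"
  assumes dim: "dim_vec u = dim_vec y" and y: "vnorm y = 1" and u: "vnorm u \<le> M"
    and uy: "u \<bullet>c y = of_real M"
  shows "u = of_real M \<cdot>\<^sub>v y"
proof -
  define d where "d = u - of_real M \<cdot>\<^sub>v y"
  have "y \<bullet>c u = of_real M" using cscalar_prod_swap[OF dim] uy by simp
  moreover have "d \<bullet>c d = u \<bullet>c u - of_real M * (u \<bullet>c y) - of_real M * (y \<bullet>c u) + of_real (M * M) * (y \<bullet>c y)"
    using dim unfolding d_def cscalar_prod_complex
    by (simp add: sum_subtractf sum.distrib sum_distrib_left algebra_simps)
  ultimately have "d \<bullet>c d = of_real ((vnorm u)\<^sup>2 - M\<^sup>2)"
    using uy y by (simp add: cscalar_prod_self power2_eq_square)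
  then have "(vnorm d)\<^sup>2 = (vnorm u)\<^sup>2 - M\<^sup>2"
    by (metis cscalar_prod_self of_real_eq_iff)
  moreover have "(vnorm u)\<^sup>2 \<le> M\<^sup>2" using u vnorm_nonneg by (simp add: power_mono)
  ultimately have "(vnorm d)\<^sup>2 \<le> 0" by linarith
  then have "vnorm d = 0" by simp
  then have "d = 0\<^sub>v (dim_vec y)" using dim by (simp add: vnorm_eq_0_iff d_def)
  show ?thesis
  proof (rule eq_vecI)
    fix i assume "i < dim_vec (of_real M \<cdot>\<^sub>v y)"
    moreover from this have "d $ i = 0" using \<open>d = 0\<^sub>v (dim_vec y)\<close> by simp
    ultimately show "u $ i = (of_real M \<cdot>\<^sub>v y) $ i" using dim by (simp add: d_def)
  qed (use dim in simp)
qed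

section \<open>Operator norm\<close>

lemma vnorm_vec: "vnorm (vec n f) = sqrt (\<Sum>i<n. (cmod (f i))\<^sup>2)"
  by (simp add: vnorm_def)

text \<open>Compactness of the unit sphere is obtained in the product space \<open>nat \<Rightarrow> complex\<close>, with the
  coefficients beyond \<open>n\<close> fixed to \<open>0\<close>.\<close>
lemma compact_unit_sphere_coeffs:
  "compact {f :: nat \<Rightarrow> complex. (\<forall>i. f i \<in> (if i < n then cball 0 1 else {0})) \<and> vnorm (vec n f) = 1}"
proof -
  let ?K = "\<lambda>i::nat. if i < n then cball (0::complex) 1 else {0}"
  have "compactin (product_topology (\<lambda>i. euclidean) UNIV) (PiE UNIV ?K)"
    by (subst compactin_PiE) simp
  moreover have "PiE UNIV ?K = {f. \<forall>i. f i \<in> ?K i}"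
    by (simp add: PiE_def Pi_def extensional_def)
  ultimately have "compact {f. \<forall>i. f i \<in> ?K i}"
    by (simp add: euclidean_product_topology)
  moreover have "closed {f :: nat \<Rightarrow> complex. vnorm (vec n f) = 1}"
    unfolding vnorm_vec
    by (intro closed_Collect_eq continuous_intros continuous_on_subset[OF continuous_on_product_coordinates]) auto
  ultimately show ?thesis
    by (simp add: Collect_conj_eq compact_Int_closed)
qed

lemma opnorm_attained:
  fixes A :: "complex mat"
  assumes A: "A \<in> carrier_mat m n" and n: "n > 0"
  obtains x where "x \<in> carrier_vec n" "vnorm x = 1" "vnorm (A *\<^sub>v x) = opnorm A"
    and "\<And>z. z \<in> carrier_vec n \<Longrightarrow> vnorm z = 1 \<Longrightarrow> vnorm (A *\<^sub>v z) \<le> opnorm A"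
proof -
  define S where "S = {f :: nat \<Rightarrow> complex. (\<forall>i. f i \<in> (if i < n then cball 0 1 else {0})) \<and> vnorm (vec n f) = 1}"
  have coeffs_in_S: "(\<lambda>i. if i < n then z $ i else 0) \<in> S" and vec_coeffs: "vec n (\<lambda>i. if i < n then z $ i else 0) = z"
    if "z \<in> carrier_vec n" "vnorm z = 1" for z :: "complex vec"
  proof -
    show "vec n (\<lambda>i. if i < n then z $ i else 0) = z" using that(1) by auto
    then show "(\<lambda>i. if i < n then z $ i else 0) \<in> S"
      using that vnorm_eq_L2_set[of z] member_le_L2_set[of "{..<n}" _ "\<lambda>i. cmod (z $ i)"] by (auto simp: S_def)
  qed
  have "unit_vec n 0 \<in> carrier_vec n" "vnorm (unit_vec n 0 :: complex vec) = 1"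
    using n by (auto simp: vnorm_unit_vec)
  then have "S \<noteq> {}" using coeffs_in_S by blast
  moreover have "continuous_on S (\<lambda>f. vnorm (A *\<^sub>v vec n f))"
  proof -
    have mv: "A *\<^sub>v vec n f = vec m (\<lambda>i. \<Sum>j<n. A $$ (i,j) * f j)" for f
      using A by (intro eq_vecI) (auto simp: scalar_prod_def lessThan_atLeast0)
    show ?thesis
      unfolding mv vnorm_vec by (intro continuous_intros continuous_on_subset[OF continuous_on_product_coordinates]) auto
  qed
  ultimately obtain f where f: "f \<in> S" and f_max: "\<And>g. g \<in> S \<Longrightarrow> vnorm (A *\<^sub>v vec n g) \<le> vnorm (A *\<^sub>v vec n f)"
    using continuous_attains_sup[OF compact_unit_sphere_coeffs[of n, folded S_def]] by blast
  define x where "x = vec n f"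
  have x: "x \<in> carrier_vec n" "vnorm x = 1" using f by (auto simp: S_def x_def)
  have le: "vnorm (A *\<^sub>v z) \<le> vnorm (A *\<^sub>v x)" if "z \<in> carrier_vec n" "vnorm z = 1" for z
    using f_max[OF coeffs_in_S[OF that]] vec_coeffs[OF that] by (simp add: x_def)
  have "opnorm A = vnorm (A *\<^sub>v x)"
    unfolding opnorm_def using A x le by (intro cSup_eq_maximum) auto
  with x le that show ?thesis by auto
qed

lemma vnorm_mult_mat_vec_le:
  fixes A :: "complex mat"
  assumes A: "A \<in> carrier_mat m n" and v: "v \<in> carrier_vec n"
  shows "vnorm (A *\<^sub>v v) \<le> opnorm A * vnorm v"
proof (cases "vnorm v = 0")
  case True
  then have "A *\<^sub>v v = 0\<^sub>v m" using A v by (intro eq_vecI) (auto simp: vnorm_eq_0_iff)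
  then show ?thesis using True by (simp add: vnorm_def)
next
  case False
  then have pos: "vnorm v > 0" using vnorm_nonneg[of v] by linarith
  then have "n > 0" using v by (cases "n = 0") (auto simp: vnorm_def)
  define x where "x = of_real (1 / vnorm v) \<cdot>\<^sub>v v"
  have "x \<in> carrier_vec n" "vnorm x = 1"
    unfolding x_def using v pos by (auto simp: vnorm_smult norm_divide)
  then have "vnorm (A *\<^sub>v x) \<le> opnorm A"
    using opnorm_attained[OF A \<open>n > 0\<close>] by metis
  moreover have "vnorm (A *\<^sub>v x) = vnorm (A *\<^sub>v v) / vnorm v"
    unfolding x_def using A v pos by (simp add: mult_mat_vec vnorm_smult norm_divide)
  ultimately show ?thesis using pos by (simp add: field_simps)
qed

section \<open>Adjoint and unitary matrices\<close>

lemma adj_carrier [simp]: "A \<in> carrier_mat m n \<Longrightarrow> adj A \<in> carrier_mat n m"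
  unfolding adj_def by auto

lemma adj_dims [simp]: "dim_row (adj A) = dim_col A" "dim_col (adj A) = dim_row A"
  unfolding adj_def by auto

lemma adj_index [simp]: "i < dim_col A \<Longrightarrow> j < dim_row A \<Longrightarrow> adj A $$ (i,j) = cnj (A $$ (j,i))"
  unfolding adj_def by auto

lemma adj_adj [simp]: "adj (adj A) = A"
  by (intro eq_matI) auto

lemma adj_mult:
  assumes "A \<in> carrier_mat m k" "B \<in> carrier_mat k n"
  shows "adj (A * B) = adj B * adj A"
  using assms by (intro eq_matI) (auto simp: scalar_prod_def cnj_sum mult.commute)

lemma cscalar_prod_adj:
  fixes A :: "complex mat"
  assumes A: "A \<in> carrier_mat m n" and v: "v \<in> carrier_vec n" and y: "y \<in> carrier_vec m"
  shows "(A *\<^sub>v v) \<bullet>c y = v \<bullet>c (adj A *\<^sub>v y)"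
proof -
  have "(A *\<^sub>v v) \<bullet>c y = (\<Sum>i<m. \<Sum>j<n. v $ j * (A $$ (i,j) * cnj (y $ i)))"
    using A v y by (simp add: cscalar_prod_complex index_mult_mat_vec_sum sum_distrib_left sum_distrib_right mult_ac
        del: index_mult_mat_vec)
  also have "\<dots> = (\<Sum>j<n. \<Sum>i<m. v $ j * (A $$ (i,j) * cnj (y $ i)))"
    by (rule sum.swap)
  also have "\<dots> = v \<bullet>c (adj A *\<^sub>v y)"
    using A v y by (simp add: cscalar_prod_complex index_mult_mat_vec_sum[OF adj_carrier[OF A]] sum_distrib_left cnj_sum
        del: index_mult_mat_vec)
  finally show ?thesis .
qed

text \<open>With \<open>w = A\<^sup>* y\<close>: \<open>\<langle>w, x\<rangle> = M\<close> and \<open>\<parallel>w\<parallel>\<^sup>2 = \<langle>A w, y\<rangle> \<le> M \<parallel>w\<parallel>\<close>, so Cauchy--Schwarz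
  is an equality for \<open>w\<close> and \<open>x\<close>.\<close>
lemma adj_mult_vec_eq_of_opnorm_le:
  fixes A :: "complex mat"
  assumes A: "A \<in> carrier_mat m n" and AM: "opnorm A \<le> M"
    and x: "x \<in> carrier_vec n" "vnorm x = 1" and y: "y \<in> carrier_vec m" "vnorm y = 1"
    and Axy: "A *\<^sub>v x = of_real M \<cdot>\<^sub>v y"
  shows "adj A *\<^sub>v y = of_real M \<cdot>\<^sub>v x"
proof -
  define w where "w = adj A *\<^sub>v y"
  have w: "w \<in> carrier_vec n" unfolding w_def using A y by (metis adj_carrier mult_mat_vec_carrier)
  have "\<bar>M\<bar> = vnorm (A *\<^sub>v x)" using Axy y by (simp add: vnorm_smult)
  also have "\<dots> \<le> M" using vnorm_mult_mat_vec_le[OF A x(1)] x(2) AM by simp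
  finally have M0: "M \<ge> 0" by simp
  have "x \<bullet>c w = of_real M"
    using cscalar_prod_adj[OF A x(1) y(1)] Axy y by (simp add: w_def cscalar_prod_self)
  then have wx: "w \<bullet>c x = of_real M" using cscalar_prod_swap[of x w] w x by simp
  have "(vnorm w)\<^sup>2 = cmod (w \<bullet>c w)" unfolding cscalar_prod_self norm_of_real by simp
  also have "w \<bullet>c w = (A *\<^sub>v w) \<bullet>c y" using cscalar_prod_adj[OF A w y(1)] by (simp add: w_def)
  also have "cmod \<dots> \<le> vnorm (A *\<^sub>v w) * vnorm y" using A y by (intro norm_cscalar_prod_le) auto
  also have "\<dots> \<le> M * vnorm w"
    using vnorm_mult_mat_vec_le[OF A w] AM y(2) vnorm_nonneg[of w] by (simp add: order_trans mult_right_mono)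
  finally have "vnorm w \<le> M" using M0 vnorm_nonneg[of w]
    by (cases "vnorm w = 0") (auto simp: power2_eq_square)
  then show ?thesis
    using eq_smult_of_cscalar_prod_eq[OF _ x(2) _ wx] w x A unfolding w_def by simp
qed

lemma unitary_mat_adj: "unitary_mat n U \<Longrightarrow> unitary_mat n (adj U)"
  unfolding unitary_mat_def by auto

lemma unitary_mat_conj_cancel:
  assumes U: "unitary_mat n U" and W: "unitary_mat n W" and A: "A \<in> carrier_mat n n"
  shows "U * (adj U * A * W) * adj W = A"
proof -
  have Uc: "U \<in> carrier_mat n n" and Wc: "W \<in> carrier_mat n n"
    and UU: "U * adj U = 1\<^sub>m n" and WW: "W * adj W = 1\<^sub>m n"
    using U W unfolding unitary_mat_def by auto
  define B where "B = adj U * A"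
  have B: "B \<in> carrier_mat n n" unfolding B_def using Uc A by (metis adj_carrier mult_carrier_mat)
  have "B * W * adj W = B"
    using assoc_mult_mat[OF B Wc adj_carrier[OF Wc]] WW B by simp
  moreover have "U * B = A"
    using assoc_mult_mat[OF Uc adj_carrier[OF Uc] A] UU A unfolding B_def by simp
  ultimately show ?thesis
    using assoc_mult_mat[OF Uc mult_carrier_mat[OF B Wc] adj_carrier[OF Wc]] unfolding B_def[symmetric] by simp
qed

lemma index_adj_mult_self:
  fixes A :: "complex mat"
  assumes "A \<in> carrier_mat m n" "i < n" "j < n"
  shows "(adj A * A) $$ (i,j) = col A j \<bullet>c col A i"
proof -
  have "(adj A * A) $$ (i,j) = row (adj A) i \<bullet> col A j" using assms by simp
  also have "\<dots> = col A j \<bullet>c col A i"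
    unfolding scalar_prod_def using assms by (intro sum.cong) (auto simp: mult.commute)
  finally show ?thesis .
qed

lemma unitary_mat_of_orthonormal_cols:
  fixes W :: "complex mat"
  assumes W: "W \<in> carrier_mat n n"
    and orth: "\<And>i j. i < n \<Longrightarrow> j < n \<Longrightarrow> col W i \<bullet>c col W j = (if i = j then 1 else 0)"
  shows "unitary_mat n W"
proof -
  have "adj W * W = 1\<^sub>m n"
  proof (rule eq_matI)
    fix i j assume "i < dim_row (1\<^sub>m n :: complex mat)" "j < dim_col (1\<^sub>m n :: complex mat)"
    then show "(adj W * W) $$ (i,j) = 1\<^sub>m n $$ (i,j)"
      using index_adj_mult_self[OF W] orth by auto
  qed (use W in auto)
  then show ?thesis
    using W mat_mult_left_right_inverse[OF adj_carrier[OF W] W] unfolding unitary_mat_def by auto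
qed

lemma exists_unitary_mat_first_col:
  fixes x :: "complex vec"
  assumes x: "x \<in> carrier_vec n" and x1: "vnorm x = 1"
  obtains W where "unitary_mat n W" "col W 0 = x"
proof -
  have x0: "x \<noteq> 0\<^sub>v n" using x x1 vnorm_eq_0_iff[of x] by auto
  have n: "n > 0"
  proof (rule ccontr)
    assume "\<not> n > 0"
    then have "x = 0\<^sub>v n" using x by (intro eq_vecI) auto
    with x0 show False by contradiction
  qed
  interpret V: cof_vec_space n "TYPE(complex)" .
  define us where "us = gram_schmidt n (basis_completion x)"
  note bc = V.basis_completion[OF x x0]
  note gs = V.gram_schmidt_result[OF bc(2) bc(4) bc(5) us_def]
  have len: "length us = n" using gs(4) bc(6) by simp
  have us_carrier: "\<And>i. i < n \<Longrightarrow> us ! i \<in> carrier_vec n" using gs(3) len by auto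
  have bc_Cons: "basis_completion x = x # tl (basis_completion x)"
    using bc(6,7) n by (cases "basis_completion x") auto
  have "hd us = x" unfolding us_def by (subst bc_Cons) (rule V.gram_schmidt_hd[OF x])
  then have us0: "us ! 0 = x" using len n by (cases us) auto
  define W where "W = mat_of_cols n (map (\<lambda>u. of_real (1 / vnorm u) \<cdot>\<^sub>v u) us)"
  have W: "W \<in> carrier_mat n n" unfolding W_def by (metis len length_map mat_of_cols_carrier(1))
  have col_W: "col W j = of_real (1 / vnorm (us ! j)) \<cdot>\<^sub>v us ! j" if "j < n" for j
    unfolding W_def using that len us_carrier[OF that] by (subst col_mat_of_cols) auto
  have "col W i \<bullet>c col W j = (if i = j then 1 else 0)" if ij: "i < n" "j < n" for i j
  proof (cases "i = j")
    case True
    have "us ! i \<bullet>c us ! i \<noteq> 0" using corthogonalD[OF gs(2)] len ij by simp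
    then have "vnorm (us ! i) \<noteq> 0" by (simp add: cscalar_prod_self)
    then have "vnorm (col W i) = 1" using ij by (simp add: col_W vnorm_smult norm_divide vnorm_nonneg)
    then show ?thesis using True by (simp add: cscalar_prod_self)
  next
    case False
    then have "us ! i \<bullet>c us ! j = 0" using corthogonalD[OF gs(2)] len ij by simp
    moreover have "dim_vec (us ! i) = dim_vec (us ! j)" using us_carrier[OF ij(1)] us_carrier[OF ij(2)] by simp
    ultimately show ?thesis
      unfolding col_W[OF ij(1)] col_W[OF ij(2)] using False by (subst cscalar_prod_smult) simp_all
  qed
  then have "unitary_mat n W" by (rule unitary_mat_of_orthonormal_cols[OF W])
  moreover have "col W 0 = x" using col_W[OF n] us0 x1 by simp
  ultimately show ?thesis by (rule that)
qed

section \<open>Block structure\<close>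

definition lower_right_block :: "'a mat \<Rightarrow> 'a mat" where
  "lower_right_block A = mat (dim_row A - 1) (dim_col A - 1) (\<lambda>(i,j). A $$ (Suc i, Suc j))"

lemma four_block_mat_lower_right_block:
  fixes A :: "'a :: zero mat"
  assumes A: "A \<in> carrier_mat (Suc k) (Suc k)"
    and col0: "\<And>i. i < Suc k \<Longrightarrow> A $$ (i,0) = (if i = 0 then c else 0)"
    and row0: "\<And>j. j < Suc k \<Longrightarrow> A $$ (0,j) = (if j = 0 then c else 0)"
  shows "A = four_block_mat (mat 1 1 (\<lambda>_. c)) (0\<^sub>m 1 k) (0\<^sub>m k 1) (lower_right_block A)"
proof (rule eq_matI)
  fix i j assume i: "i < dim_row (four_block_mat (mat 1 1 (\<lambda>_. c)) (0\<^sub>m 1 k) (0\<^sub>m k 1) (lower_right_block A))"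
    and j: "j < dim_col (four_block_mat (mat 1 1 (\<lambda>_. c)) (0\<^sub>m 1 k) (0\<^sub>m k 1) (lower_right_block A))"
  then have "i < Suc k" "j < Suc k" using A by (auto simp: lower_right_block_def)
  then show "A $$ (i,j) = four_block_mat (mat 1 1 (\<lambda>_. c)) (0\<^sub>m 1 k) (0\<^sub>m k 1) (lower_right_block A) $$ (i,j)"
    using A col0 row0 by (cases i; cases j) (auto simp: lower_right_block_def)
qed (use A in \<open>auto simp: lower_right_block_def\<close>)

lemma index_unitary_conj_first_col:
  fixes A U W :: "complex mat"
  assumes U: "unitary_mat n U" and W: "unitary_mat n W" and A: "A \<in> carrier_mat n n"
    and AW: "A *\<^sub>v col W 0 = c \<cdot>\<^sub>v col U 0" and i: "i < n"
  shows "(adj U * A * W) $$ (i,0) = (if i = 0 then c else 0)"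
proof -
  have Uc: "U \<in> carrier_mat n n" and Wc: "W \<in> carrier_mat n n" and UU: "adj U * U = 1\<^sub>m n"
    using U W unfolding unitary_mat_def by auto
  have n: "0 < n" using i by simp
  have UA: "adj U * A \<in> carrier_mat n n" using Uc A by (metis adj_carrier mult_carrier_mat)
  have "col (adj U * A * W) 0 = adj U *\<^sub>v (A *\<^sub>v col W 0)"
    using col_mult2[OF UA Wc n] assoc_mult_mat_vec[OF adj_carrier[OF Uc] A] Wc col_dim[of W 0] by simp
  also have "\<dots> = c \<cdot>\<^sub>v col (adj U * U) 0"
    using col_mult2[OF adj_carrier[OF Uc] Uc n] mult_mat_vec[OF adj_carrier[OF Uc], of "col U 0"] Uc col_dim[of U 0]
    by (simp add: AW)
  also have "\<dots> = c \<cdot>\<^sub>v unit_vec n 0" using UU n by simp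
  finally have "col (adj U * A * W) 0 = c \<cdot>\<^sub>v unit_vec n 0" .
  moreover have "(adj U * A * W) $$ (i,0) = col (adj U * A * W) 0 $ i"
    using carrier_matD[OF UA] carrier_matD[OF Wc] i n by simp
  ultimately show ?thesis using i by simp
qed

text \<open>The first row is the conjugate of the first column of \<open>adj (adj U * A * W) = adj W * adj A * U\<close>,
  which has the same shape with \<open>U, W, A\<close> replaced by \<open>W, U, adj A\<close>.\<close>
lemma unitary_conj_eq_four_block_mat:
  fixes A U W :: "complex mat"
  assumes U: "unitary_mat (Suc k) U" and W: "unitary_mat (Suc k) W" and A: "A \<in> carrier_mat (Suc k) (Suc k)"
    and AW: "A *\<^sub>v col W 0 = of_real c \<cdot>\<^sub>v col U 0" and AU: "adj A *\<^sub>v col U 0 = of_real c \<cdot>\<^sub>v col W 0"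
  shows "adj U * A * W =
    four_block_mat (mat 1 1 (\<lambda>_. of_real c)) (0\<^sub>m 1 k) (0\<^sub>m k 1) (lower_right_block (adj U * A * W))"
proof (rule four_block_mat_lower_right_block)
  have Uc: "U \<in> carrier_mat (Suc k) (Suc k)" and Wc: "W \<in> carrier_mat (Suc k) (Suc k)"
    using U W unfolding unitary_mat_def by auto
  then show "adj U * A * W \<in> carrier_mat (Suc k) (Suc k)" using A by (metis adj_carrier mult_carrier_mat)
  show "(adj U * A * W) $$ (i,0) = (if i = 0 then of_real c else 0)" if "i < Suc k" for i
    using index_unitary_conj_first_col[OF U W A AW that] .
  have UA: "adj U * A \<in> carrier_mat (Suc k) (Suc k)" using Uc A by (metis adj_carrier mult_carrier_mat)
  have adj_conj: "adj (adj U * A * W) = adj W * adj A * U"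
    unfolding adj_mult[OF UA Wc] adj_mult[OF adj_carrier[OF Uc] A] adj_adj
    by (rule assoc_mult_mat[OF adj_carrier[OF Wc] adj_carrier[OF A] Uc, symmetric])
  fix j assume j: "j < Suc k"
  have "(adj U * A * W) $$ (0,j) = cnj (adj (adj U * A * W) $$ (j,0))"
    by (subst adj_index) (use carrier_matD[OF mult_carrier_mat[OF UA Wc]] j in auto)
  also have "\<dots> = (if j = 0 then of_real c else 0)"
    unfolding adj_conj index_unitary_conj_first_col[OF W U adj_carrier[OF A] AU j] by simp
  finally show "(adj U * A * W) $$ (0,j) = (if j = 0 then of_real c else 0)" .
qed

section \<open>Matrix-valued analytic functions\<close>

lemma mat_analytic_on_holomorphic_entries:
  assumes "mat_analytic_on n F S" "open S" "i < n" "j < n"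
  shows "(\<lambda>z. F z $$ (i,j)) holomorphic_on S"
  using assms by (simp add: mat_analytic_on_def analytic_on_open)

text \<open>The analytic function \<open>z \<mapsto> \<langle>F z x, y\<rangle>\<close> is bounded by \<open>M\<close> and equals \<open>M\<close> at \<open>z\<^sub>0\<close>, so it is
  constant by the maximum modulus principle.\<close>
lemma mult_mat_vec_const_of_opnorm_max:
  fixes F :: "complex \<Rightarrow> complex mat"
  assumes S: "open S" "connected S" and F: "mat_analytic_on n F S"
    and bound: "\<And>z. z \<in> S \<Longrightarrow> opnorm (F z) \<le> M"
    and x: "x \<in> carrier_vec n" "vnorm x = 1" and y: "y \<in> carrier_vec n" "vnorm y = 1"
    and z0: "z0 \<in> S" "F z0 *\<^sub>v x = of_real M \<cdot>\<^sub>v y" and z: "z \<in> S"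
  shows "F z *\<^sub>v x = of_real M \<cdot>\<^sub>v y"
proof -
  have Fc: "\<And>z. z \<in> S \<Longrightarrow> F z \<in> carrier_mat n n" using F by (simp add: mat_analytic_on_def)
  define f where "f z = (\<Sum>i<n. (\<Sum>j<n. F z $$ (i,j) * x $ j) * cnj (y $ i))" for z
  have f_eq: "f z = (F z *\<^sub>v x) \<bullet>c y" if "z \<in> S" for z
    using Fc[OF that] x y by (simp add: f_def cscalar_prod_complex index_mult_mat_vec_sum del: index_mult_mat_vec)
  have "f holomorphic_on S"
    unfolding f_def by (intro holomorphic_intros mat_analytic_on_holomorphic_entries[OF F S(1)]) auto
  moreover have f_le: "norm (f z) \<le> M" if "z \<in> S" for z
  proof -
    have "norm (f z) \<le> vnorm (F z *\<^sub>v x) * vnorm y"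
      unfolding f_eq[OF that] using Fc[OF that] y by (intro norm_cscalar_prod_le) auto
    also have "\<dots> \<le> M" using vnorm_mult_mat_vec_le[OF Fc[OF that] x(1)] bound[OF that] x(2) y(2) by simp
    finally show ?thesis .
  qed
  moreover have f_z0: "f z0 = of_real M"
    using f_eq[OF z0(1)] z0(2) y by (simp add: cscalar_prod_self)
  ultimately have "f constant_on S"
    using f_le[OF z0(1)] by (intro maximum_modulus_principle[OF _ S S(1) order_refl z0(1)]) auto
  then have "f z = of_real M" using f_z0 z0(1) z unfolding constant_on_def by metis
  moreover have "vnorm (F z *\<^sub>v x) \<le> M"
    using vnorm_mult_mat_vec_le[OF Fc[OF z] x(1)] bound[OF z] x(2) by simp
  ultimately show ?thesis
    using eq_smult_of_cscalar_prod_eq[of "F z *\<^sub>v x" y M] f_eq[OF z] Fc[OF z] x y(1,2) by simp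
qed

lemma mat_analytic_on_mult_const:
  assumes F: "mat_analytic_on n F S" and S: "open S"
    and A: "A \<in> carrier_mat n n" and B: "B \<in> carrier_mat n n"
  shows "mat_analytic_on n (\<lambda>z. A * F z * B) S"
  unfolding mat_analytic_on_def analytic_on_open[OF S]
proof (intro conjI ballI allI impI)
  have Fc: "\<And>z. z \<in> S \<Longrightarrow> F z \<in> carrier_mat n n" using F by (simp add: mat_analytic_on_def)
  then show "A * F z * B \<in> carrier_mat n n" if "z \<in> S" for z
    using that A B by (metis mult_carrier_mat)
  fix i j assume ij: "i < n" "j < n"
  have holo: "(\<lambda>z. \<Sum>l<n. (\<Sum>k<n. A $$ (i,k) * F z $$ (k,l)) * B $$ (l,j)) holomorphic_on S"
    by (intro holomorphic_intros mat_analytic_on_holomorphic_entries[OF F S]) auto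
  have entry: "(A * F z * B) $$ (i,j) = (\<Sum>l<n. (\<Sum>k<n. A $$ (i,k) * F z $$ (k,l)) * B $$ (l,j))"
    if "z \<in> S" for z
    using carrier_matD[OF Fc[OF that]] carrier_matD[OF A] carrier_matD[OF B] ij
    by (simp add: scalar_prod_def lessThan_atLeast0)
  show "(\<lambda>z. (A * F z * B) $$ (i,j)) holomorphic_on S"
    using holo by (rule holomorphic_transform) (simp add: entry)
qed

lemma mat_analytic_on_lower_right_block:
  assumes F: "mat_analytic_on (Suc k) F S" and S: "open S"
  shows "mat_analytic_on k (\<lambda>z. lower_right_block (F z)) S"
  unfolding mat_analytic_on_def analytic_on_open[OF S]
proof (intro conjI ballI allI impI)
  have dims: "dim_row (F z) = Suc k" "dim_col (F z) = Suc k" if "z \<in> S" for z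
    using F that by (auto simp: mat_analytic_on_def)
  then show "lower_right_block (F z) \<in> carrier_mat k k" if "z \<in> S" for z
    using that by (simp add: lower_right_block_def)
  fix i j assume ij: "i < k" "j < k"
  have "(\<lambda>z. F z $$ (Suc i, Suc j)) holomorphic_on S"
    using mat_analytic_on_holomorphic_entries[OF F S] ij by simp
  then show "(\<lambda>z. lower_right_block (F z) $$ (i,j)) holomorphic_on S"
    by (rule holomorphic_transform) (simp add: lower_right_block_def dims ij)
qed

theorem theorem4:
  fixes n :: nat and \<Omega> :: "complex set" and F :: "complex \<Rightarrow> complex mat" and z0 :: complex
  assumes "n \<ge> 2"
    and "open \<Omega>" and "connected \<Omega>" and "\<Omega> \<noteq> {}"
    and "mat_analytic_on n F \<Omega>"
    and "z0 \<in> \<Omega>"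
    and "\<forall>z\<in>\<Omega>. opnorm (F z) \<le> opnorm (F z0)"
  shows "\<exists>U V G. unitary_mat n U \<and> unitary_mat n V \<and> mat_analytic_on (n - 1) G \<Omega> \<and>
           (\<forall>z\<in>\<Omega>. F z = U * four_block_mat (mat 1 1 (\<lambda>_. complex_of_real (opnorm (F z0))))
                                         (0\<^sub>m 1 (n - 1)) (0\<^sub>m (n - 1) 1) (G z) * V)"
proof -
  obtain k where k: "n = Suc k" using assms(1) by (cases n) auto
  note F = assms(5)[unfolded k]
  have Fc: "\<And>z. z \<in> \<Omega> \<Longrightarrow> F z \<in> carrier_mat (Suc k) (Suc k)" using F by (simp add: mat_analytic_on_def)
  define M where "M = opnorm (F z0)"
  obtain x where x: "x \<in> carrier_vec (Suc k)" "vnorm x = 1" "vnorm (F z0 *\<^sub>v x) = M"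
    using opnorm_attained[OF Fc[OF assms(6)]] M_def by blast
  obtain y where y: "y \<in> carrier_vec (Suc k)" "vnorm y = 1" "F z0 *\<^sub>v x = of_real M \<cdot>\<^sub>v y"
    using exists_unit_vec_smult_eq[of "F z0 *\<^sub>v x" "Suc k"] Fc[OF assms(6)] x by auto
  obtain U where U: "unitary_mat (Suc k) U" "col U 0 = y" using exists_unitary_mat_first_col[OF y(1,2)] .
  obtain W where W: "unitary_mat (Suc k) W" "col W 0 = x" using exists_unitary_mat_first_col[OF x(1,2)] .
  define G where "G z = lower_right_block (adj U * F z * W)" for z
  have "F z = U * four_block_mat (mat 1 1 (\<lambda>_. of_real M)) (0\<^sub>m 1 k) (0\<^sub>m k 1) (G z) * adj W"
    if z: "z \<in> \<Omega>" for z
  proof -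
    have Fx: "F z *\<^sub>v x = of_real M \<cdot>\<^sub>v y"
      using mult_mat_vec_const_of_opnorm_max[OF assms(2,3) F _ x(1,2) y(1,2) assms(6) y(3) z] assms(7)
      unfolding M_def by blast
    moreover have "adj (F z) *\<^sub>v y = of_real M \<cdot>\<^sub>v x"
      using adj_mult_vec_eq_of_opnorm_le[OF Fc[OF z] _ x(1,2) y(1,2) Fx] assms(7) z unfolding M_def by blast
    ultimately show ?thesis
      using unitary_conj_eq_four_block_mat[OF U(1) W(1) Fc[OF z]] unitary_mat_conj_cancel[OF U(1) W(1) Fc[OF z]]
      unfolding G_def U(2) W(2) by metis
  qed
  moreover have "mat_analytic_on k G \<Omega>"
    unfolding G_def using U(1) W(1)
    by (intro mat_analytic_on_lower_right_block mat_analytic_on_mult_const[OF F assms(2)] assms(2))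
      (auto simp: unitary_mat_def)
  ultimately show ?thesis
    using U(1) unitary_mat_adj[OF W(1)] unfolding k M_def by auto
qed

end
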